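(* Let $G=(V,E)$ be a connected simple finite graph with at least two vertices and let $p\in(0,\infty)$. There exists $f:V\to[0,\infty)$ with ${\rm Var}_p f>0$ such that $$\frac{{\rm Var}_p M_Gf}{{\rm Var}_p f}=\mathbf{C}_{G,p}.$$
   Context: For a finite connected graph $G=(V,E)$ with graph distance $d_G$ and $f:V\to\mathbb{R}$, $M_Gf(v)=\sup_{r\geq 0}\frac{1}{|B(v,r)|}\sum_{u\in B(v,r)}|f(u)|$, where $B(v,r)=\{u\in V: d_G(u,v)\le r\}$. For $g:V\to\mathbb{R}$ and $p>0$, ${\rm Var}_p g=\left(\sum_{\{v_1,v_2\}\in E}|g(v_1)-g(v_2)|^p\right)^{1/p}$, and $\mathbf{C}_{G,p}=\sup\{{\rm Var}_pM_Gf/{\rm Var}_pf:\ f:V\to\mathbb{R},\ {\rm Var}_pf>0\}$. *)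

theory Defs
  imports "HOL-Analysis.Analysis" "HOL-Library.Extended_Real"
begin

definition simple_graph :: "'a set \<Rightarrow> 'a set set \<Rightarrow> bool" where
  "simple_graph V E \<longleftrightarrow> finite V \<and> (\<forall>e\<in>E. e \<subseteq> V \<and> card e = 2)"

definition adj_rel :: "'a set set \<Rightarrow> ('a \<times> 'a) set" where
  "adj_rel E = {(x, y). {x, y} \<in> E}"

definition connected_graph :: "'a set \<Rightarrow> 'a set set \<Rightarrow> bool" where
  "connected_graph V E \<longleftrightarrow> (\<forall>u\<in>V. \<forall>v\<in>V. (u, v) \<in> (adj_rel E)\<^sup>*)"

definition gdist :: "'a set set \<Rightarrow> 'a \<Rightarrow> 'a \<Rightarrow> nat" where
  "gdist E u v = (LEAST n. (u, v) \<in> (adj_rel E) ^^ n)"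

definition gball :: "'a set \<Rightarrow> 'a set set \<Rightarrow> 'a \<Rightarrow> real \<Rightarrow> 'a set" where
  "gball V E v r = {u \<in> V. real (gdist E u v) \<le> r}"

definition maxfun :: "'a set \<Rightarrow> 'a set set \<Rightarrow> ('a \<Rightarrow> real) \<Rightarrow> 'a \<Rightarrow> real" where
  "maxfun V E f v = Sup {(\<Sum>u\<in>gball V E v r. \<bar>f u\<bar>) / real (card (gball V E v r)) | r. r \<ge> 0}"

text \<open>p-variation: sum over edges {v1,v2} of |g v1 - g v2|^p, written as half the sum over
  ordered pairs (v1,v2) with {v1,v2} an edge (each edge counted twice), then the 1/p-th power.\<close>
definition Varp :: "'a set set \<Rightarrow> real \<Rightarrow> ('a \<Rightarrow> real) \<Rightarrow> real" where
  "Varp E p g = ((\<Sum>(u, v)\<in>adj_rel E. \<bar>g u - g v\<bar> powr p) / 2) powr (1 / p)"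

text \<open>The best constant C_{G,p}, as an extended real (a priori it could be infinite).\<close>
definition Cconst :: "'a set \<Rightarrow> 'a set set \<Rightarrow> real \<Rightarrow> ereal" where
  "Cconst V E p = (SUP f \<in> {f :: 'a \<Rightarrow> real. Varp E p f > 0}.
       ereal (Varp E p (maxfun V E f) / Varp E p f))"

end

theory Submission
  imports Defs
begin

(* Replacing f by |f| leaves M f unchanged and does not increase Var_p f. For f >= 0 the ratio
   Var_p (M f) / Var_p f is invariant under f |-> (f - min f) / Var_p f, because averages over
   balls commute with affine maps of nonnegative functions. The normalised functions vanish
   somewhere and change by at most Var_p = 1 along each edge, so they take values in
   [0, diam G]; they form a compact set, on which the continuous map f |-> Var_p (M f) attains
   its maximum. *)

lemma simple_graph_finite: "simple_graph V E \<Longrightarrow> finite V"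
  unfolding simple_graph_def by blast

lemma adj_rel_subset: "simple_graph V E \<Longrightarrow> adj_rel E \<subseteq> V \<times> V"
  unfolding simple_graph_def adj_rel_def by auto

lemma finite_adj_rel: "simple_graph V E \<Longrightarrow> finite (adj_rel E)"
  by (metis adj_rel_subset finite_SigmaI finite_subset simple_graph_def)

lemma adj_rel_sym: "(a, b) \<in> adj_rel E \<Longrightarrow> (b, a) \<in> adj_rel E"
  unfolding adj_rel_def by (simp add: insert_commute)

lemma adj_rel_irrefl:
  assumes "simple_graph V E" "(a, b) \<in> adj_rel E"
  shows "a \<noteq> b"
proof
  assume "a = b"
  then have "{a} \<in> E" using assms(2) unfolding adj_rel_def by simp
  then have "card {a} = 2" using assms(1) unfolding simple_graph_def by blast
  then show False by simp
qed

lemma connected_graph_obtain_edge: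
  assumes "simple_graph V E" "connected_graph V E" "card V \<ge> 2"
  obtains a b where "(a, b) \<in> adj_rel E"
proof -
  have "finite V" "\<not> card V \<le> Suc 0"
    using simple_graph_finite[OF assms(1)] assms(3) by auto
  then obtain x y where xy: "x \<in> V" "y \<in> V" "x \<noteq> y"
    using card_le_Suc0_iff_eq by blast
  then have "(x, y) \<in> (adj_rel E)\<^sup>*"
    using assms(2) unfolding connected_graph_def by blast
  then obtain z where "(x, z) \<in> adj_rel E"
    using xy(3) by (auto elim: converse_rtranclE)
  then show ?thesis by (rule that)
qed

lemma gdist_self: "gdist E u u = 0"
  unfolding gdist_def by (rule Least_eq_0) simp

lemma gdist_relpow:
  assumes "(u, v) \<in> (adj_rel E)\<^sup>*"
  shows "(u, v) \<in> adj_rel E ^^ gdist E u v"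
proof -
  obtain n where "(u, v) \<in> adj_rel E ^^ n"
    using assms rtrancl_power by blast
  then show ?thesis
    unfolding gdist_def by (rule LeastI)
qed

definition graph_diam :: "'a set \<Rightarrow> 'a set set \<Rightarrow> nat" where
  "graph_diam V E = Max ((\<lambda>(u, v). gdist E u v) ` (V \<times> V))"

lemma gdist_le_graph_diam:
  "finite V \<Longrightarrow> u \<in> V \<Longrightarrow> v \<in> V \<Longrightarrow> gdist E u v \<le> graph_diam V E"
  unfolding graph_diam_def by (intro Max_ge) auto

lemma relpow_abs_diff_le:
  assumes "(w, u) \<in> R ^^ n" "\<And>a b. (a, b) \<in> R \<Longrightarrow> \<bar>g a - g b\<bar> \<le> c"
  shows "\<bar>g u - g w\<bar> \<le> real n * c"
  using assms(1)
proof (induction n arbitrary: u)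
  case (Suc n)
  from Suc.prems obtain y where "(w, y) \<in> R ^^ n" "(y, u) \<in> R" by (rule relpow_Suc_E)
  with Suc.IH assms(2)[of y u] show ?case by (fastforce simp: algebra_simps)
qed simp

lemma Varp_nonneg: "Varp E p g \<ge> 0"
  by (simp add: Varp_def)

lemma Varp_pos_imp_adj_rel_nonempty: "Varp E p f > 0 \<Longrightarrow> adj_rel E \<noteq> {}"
  by (auto simp: Varp_def)

lemma Varp_affine:
  assumes "adj_rel E \<subseteq> V \<times> V" "\<forall>x\<in>V. g x = c * f x + d" "p > 0"
  shows "Varp E p g = \<bar>c\<bar> * Varp E p f"
proof -
  have "(\<Sum>(u, v)\<in>adj_rel E. \<bar>g u - g v\<bar> powr p)
      = (\<Sum>(u, v)\<in>adj_rel E. \<bar>c\<bar> powr p * \<bar>f u - f v\<bar> powr p)"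
    using assms(1,2)
    by (intro sum.cong) (auto simp: right_diff_distrib[symmetric] abs_mult powr_mult)
  then have "Varp E p g
      = (\<bar>c\<bar> powr p * ((\<Sum>(u, v)\<in>adj_rel E. \<bar>f u - f v\<bar> powr p) / 2)) powr (1 / p)"
    unfolding Varp_def by (simp add: sum_distrib_left case_prod_unfold)
  also have "\<dots> = \<bar>c\<bar> * Varp E p f"
    unfolding Varp_def powr_mult using assms(3) by (simp add: powr_powr)
  finally show ?thesis .
qed

lemma edge_diff_le_Varp:
  assumes "simple_graph V E" "(a, b) \<in> adj_rel E" "p > 0"
  shows "\<bar>g a - g b\<bar> \<le> Varp E p g"
proof -
  let ?\<delta> = "\<lambda>(u, v). \<bar>g u - g v\<bar> powr p"
  \<comment> \<open>Both orientations of the edge occur in adj_rel, which cancels the factor 1/2 in Varp.\<close>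
  have "2 * \<bar>g a - g b\<bar> powr p = sum ?\<delta> {(a, b), (b, a)}"
    using adj_rel_irrefl[OF assms(1,2)] by (simp add: abs_minus_commute)
  also have "\<dots> \<le> sum ?\<delta> (adj_rel E)"
    using assms(2) adj_rel_sym finite_adj_rel[OF assms(1)] by (intro sum_mono2) auto
  finally have "\<bar>g a - g b\<bar> powr p \<le> sum ?\<delta> (adj_rel E) / 2" by simp
  then have "(\<bar>g a - g b\<bar> powr p) powr (1 / p) \<le> (sum ?\<delta> (adj_rel E) / 2) powr (1 / p)"
    using assms(3) by (intro powr_mono2) auto
  then show ?thesis
    unfolding Varp_def using assms(3) by (simp add: powr_powr)
qed

lemma abs_diff_le_gdist_Varp:
  assumes "simple_graph V E" "connected_graph V E" "p > 0" "u \<in> V" "w \<in> V"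
  shows "\<bar>g u - g w\<bar> \<le> real (gdist E w u) * Varp E p g"
proof -
  have "(w, u) \<in> (adj_rel E)\<^sup>*"
    using assms(2,4,5) unfolding connected_graph_def by blast
  then have "(w, u) \<in> adj_rel E ^^ gdist E w u"
    by (rule gdist_relpow)
  then show ?thesis
    using edge_diff_le_Varp[OF assms(1) _ assms(3)] by (rule relpow_abs_diff_le)
qed

lemma Varp_eq_0_iff:
  assumes "simple_graph V E" "connected_graph V E" "p > 0"
  shows "Varp E p g = 0 \<longleftrightarrow> (\<forall>u\<in>V. \<forall>v\<in>V. g u = g v)"
proof
  assume "Varp E p g = 0"
  then have "g u = g v" if "u \<in> V" "v \<in> V" for u v
    using abs_diff_le_gdist_Varp[OF assms that, of g] by simp
  then show "\<forall>u\<in>V. \<forall>v\<in>V. g u = g v"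
    by blast
next
  assume const: "\<forall>u\<in>V. \<forall>v\<in>V. g u = g v"
  have "\<bar>g u - g v\<bar> powr p = 0" if "(u, v) \<in> adj_rel E" for u v
  proof -
    have "u \<in> V" "v \<in> V" using that adj_rel_subset[OF assms(1)] by auto
    then have "g u = g v" using const by blast
    then show ?thesis by simp
  qed
  then have "(\<Sum>(u, v)\<in>adj_rel E. \<bar>g u - g v\<bar> powr p) = 0"
    by (intro sum.neutral) auto
  then show "Varp E p g = 0"
    unfolding Varp_def by simp
qed

lemma Varp_abs_le:
  assumes "p > 0"
  shows "Varp E p (\<lambda>x. \<bar>g x\<bar>) \<le> Varp E p g"
proof -
  have "(\<Sum>(u, v)\<in>adj_rel E. \<bar>\<bar>g u\<bar> - \<bar>g v\<bar>\<bar> powr p)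
      \<le> (\<Sum>(u, v)\<in>adj_rel E. \<bar>g u - g v\<bar> powr p)"
    unfolding case_prod_unfold using assms
    by (intro sum_mono powr_mono2 abs_triangle_ineq3) auto
  moreover have "0 \<le> (\<Sum>(u, v)\<in>adj_rel E. \<bar>\<bar>g u\<bar> - \<bar>g v\<bar>\<bar> powr p)"
    by (simp add: case_prod_unfold sum_nonneg)
  ultimately show ?thesis
    unfolding Varp_def using assms by (intro powr_mono2 divide_right_mono) auto
qed

lemma continuous_on_Varp:
  assumes "p > 0" "\<And>u. continuous_on S (\<lambda>f. H f u)"
  shows "continuous_on S (\<lambda>f. Varp E p (H f))"
proof -
  have edge_term: "continuous_on S (\<lambda>f. \<bar>H f u - H f v\<bar> powr p)" for u v
    using assms by (intro continuous_on_powr' continuous_intros) auto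
  have "continuous_on S (\<lambda>f. (\<Sum>(u, v)\<in>adj_rel E. \<bar>H f u - H f v\<bar> powr p) / 2)"
    unfolding case_prod_unfold
    by (intro continuous_on_divide continuous_on_sum continuous_on_const edge_term) auto
  then show ?thesis
    unfolding Varp_def using assms(1)
    by (intro continuous_on_powr' continuous_on_const) (auto simp: case_prod_unfold intro!: sum_nonneg)
qed

definition abs_avg :: "('a \<Rightarrow> real) \<Rightarrow> 'a set \<Rightarrow> real" where
  "abs_avg f B = (\<Sum>u\<in>B. \<bar>f u\<bar>) / real (card B)"

lemma gball_subset: "gball V E v r \<subseteq> V"
  unfolding gball_def by auto

lemma card_gball_pos:
  assumes "finite V" "v \<in> V" "r \<ge> 0"
  shows "card (gball V E v r) > 0"
proof -
  have "v \<in> gball V E v r"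
    using assms(2,3) by (simp add: gball_def gdist_self)
  moreover have "finite (gball V E v r)"
    using finite_subset[OF gball_subset assms(1)] .
  ultimately show ?thesis
    by (auto simp: card_gt_0_iff)
qed

lemma finite_gballs: "finite V \<Longrightarrow> finite ((\<lambda>r. gball V E v r) ` {0..})"
  by (rule finite_subset[of _ "Pow V"]) (auto simp: gball_def)

lemma maxfun_eq_Max:
  assumes "finite V"
  shows "maxfun V E f v = Max (abs_avg f ` (\<lambda>r. gball V E v r) ` {0..})"
proof -
  have "{(\<Sum>u\<in>gball V E v r. \<bar>f u\<bar>) / real (card (gball V E v r)) | r. r \<ge> 0}
      = abs_avg f ` (\<lambda>r. gball V E v r) ` {0..}"
    unfolding abs_avg_def by auto
  then show ?thesis
    unfolding maxfun_def using finite_gballs[OF assms] by (simp add: cSup_eq_Max)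
qed

lemma maxfun_abs: "maxfun V E (\<lambda>x. \<bar>f x\<bar>) = maxfun V E f"
  unfolding maxfun_def by simp

lemma maxfun_affine:
  assumes "finite V" "v \<in> V" "c \<ge> 0"
    and "\<forall>x\<in>V. 0 \<le> f x" "\<forall>x\<in>V. 0 \<le> g x" "\<forall>x\<in>V. g x = c * f x + d"
  shows "maxfun V E g v = c * maxfun V E f v + d"
proof -
  let ?Bs = "(\<lambda>r. gball V E v r) ` {0..}"
  have avg: "abs_avg g B = c * abs_avg f B + d" if "B \<in> ?Bs" for B
  proof -
    from that obtain r where "r \<ge> 0" "B = gball V E v r" by auto
    then have "B \<subseteq> V" "card B > 0"
      using gball_subset[of V E v r] card_gball_pos[OF assms(1,2), of r E] by auto
    have "\<bar>g u\<bar> = c * \<bar>f u\<bar> + d" if "u \<in> B" for u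
      using that \<open>B \<subseteq> V\<close> assms(4-6) by force
    then have "(\<Sum>u\<in>B. \<bar>g u\<bar>) = (\<Sum>u\<in>B. c * \<bar>f u\<bar> + d)"
      by (rule sum.cong[OF refl])
    also have "\<dots> = c * (\<Sum>u\<in>B. \<bar>f u\<bar>) + real (card B) * d"
      by (simp add: sum.distrib sum_distrib_left)
    finally show ?thesis
      unfolding abs_avg_def using \<open>card B > 0\<close> by (simp add: field_simps)
  qed
  have "mono (\<lambda>t. c * t + d)"
    using assms(3) by (intro monoI add_right_mono mult_left_mono)
  then have "c * Max (abs_avg f ` ?Bs) + d = Max ((\<lambda>t. c * t + d) ` abs_avg f ` ?Bs)"
    using finite_gballs[OF assms(1)] by (intro mono_Max_commute) auto
  also have "\<dots> = Max (abs_avg g ` ?Bs)"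
    unfolding image_image using avg by (intro arg_cong[where f = Max] image_cong) auto
  finally show ?thesis
    unfolding maxfun_eq_Max[OF assms(1)] by simp
qed

lemma maxfun_const_on:
  assumes "finite V" "v \<in> V" "\<forall>x\<in>V. \<bar>f x\<bar> = c"
  shows "maxfun V E f v = c"
proof -
  have "maxfun V E (\<lambda>x. \<bar>f x\<bar>) v = 0 * maxfun V E (\<lambda>_. 0) v + c"
    using assms by (intro maxfun_affine) auto
  then show ?thesis
    by (simp add: maxfun_abs)
qed

lemma continuous_on_Max:
  fixes \<phi> :: "'i \<Rightarrow> 'a::topological_space \<Rightarrow> 'b::linorder_topology"
  assumes "finite I" "I \<noteq> {}" "\<And>i. i \<in> I \<Longrightarrow> continuous_on S (\<phi> i)"
  shows "continuous_on S (\<lambda>x. Max ((\<lambda>i. \<phi> i x) ` I))"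
  using assms
proof (induction I rule: finite_ne_induct)
  case (insert i I)
  then show ?case
    by (simp add: continuous_on_max)
qed simp

lemma continuous_on_maxfun:
  assumes "finite V"
  shows "continuous_on S (\<lambda>f. maxfun V E f v)"
proof -
  have "continuous_on UNIV (\<lambda>f. abs_avg f B)" for B :: "'a set"
    unfolding abs_avg_def divide_inverse
    by (intro continuous_intros continuous_on_product_coordinates)
  then have "continuous_on UNIV (\<lambda>f. Max ((\<lambda>B. abs_avg f B) ` (\<lambda>r. gball V E v r) ` {0..}))"
    using finite_gballs[OF assms] by (intro continuous_on_Max) auto
  then show ?thesis
    unfolding maxfun_eq_Max[OF assms] by (rule continuous_on_subset) simp
qed

abbreviation maxfun_ratio :: "'a set \<Rightarrow> 'a set set \<Rightarrow> real \<Rightarrow> ('a \<Rightarrow> real) \<Rightarrow> real" where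
  "maxfun_ratio V E p f \<equiv> Varp E p (maxfun V E f) / Varp E p f"

lemma Cconst_eq_maxfun_ratio:
  assumes "Varp E p f\<^sub>0 > 0"
    and "\<And>f. Varp E p f > 0 \<Longrightarrow> maxfun_ratio V E p f \<le> maxfun_ratio V E p f\<^sub>0"
  shows "Cconst V E p = ereal (maxfun_ratio V E p f\<^sub>0)"
  unfolding Cconst_def using assms by (intro antisym SUP_least SUP_upper) auto

definition normalized_fns :: "'a set \<Rightarrow> 'a set set \<Rightarrow> real \<Rightarrow> ('a \<Rightarrow> real) set" where
  "normalized_fns V E p =
     {g \<in> Pi UNIV (\<lambda>x. if x \<in> V then {0..real (graph_diam V E)} else {0}). Varp E p g = 1}"

lemma Varp_normalized_fn: "g \<in> normalized_fns V E p \<Longrightarrow> Varp E p g = 1"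
  unfolding normalized_fns_def by blast

lemma normalized_fns_nonneg: "g \<in> normalized_fns V E p \<Longrightarrow> x \<in> V \<Longrightarrow> 0 \<le> g x"
  unfolding normalized_fns_def by (auto dest!: Pi_mem[where x = x])

lemma compact_normalized_fns:
  assumes "p > 0"
  shows "compact (normalized_fns V E p)"
proof -
  let ?box = "Pi UNIV (\<lambda>x. if x \<in> V then {0..real (graph_diam V E)} else {0::real})"
  have "compactin (product_topology (\<lambda>_. euclidean) UNIV)
      (PiE UNIV (\<lambda>x. if x \<in> V then {0..real (graph_diam V E)} else {0::real}))"
    by (subst compactin_PiE) auto
  then have "compact ?box"
    unfolding euclidean_product_topology PiE_UNIV_domain by simp
  moreover have "closed {g. Varp E p g = 1}"
    using continuous_on_Varp[OF assms, of UNIV "\<lambda>g. g"]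
    by (intro closed_Collect_eq) (auto intro: continuous_on_const)
  moreover have "normalized_fns V E p = ?box \<inter> {g. Varp E p g = 1}"
    unfolding normalized_fns_def by blast
  ultimately show ?thesis
    by (simp add: compact_Int_closed)
qed

lemma normalize_nonneg_fn:
  assumes "simple_graph V E" "connected_graph V E" "p > 0"
    and "\<forall>x\<in>V. 0 \<le> f x" "Varp E p f > 0"
  obtains g where "g \<in> normalized_fns V E p" "maxfun_ratio V E p g = maxfun_ratio V E p f"
proof -
  have fin: "finite V"
    using simple_graph_finite[OF assms(1)] .
  have "V \<noteq> {}"
    using Varp_pos_imp_adj_rel_nonempty[OF assms(5)] adj_rel_subset[OF assms(1)] by blast
  define m where "m = Min (f ` V)"
  have "m \<in> f ` V"
    unfolding m_def using fin \<open>V \<noteq> {}\<close> by (intro Min_in) auto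
  then obtain w where w: "w \<in> V" "f w = m" by blast
  have m_le: "m \<le> f x" if "x \<in> V" for x
    unfolding m_def using fin that by simp
  define l where "l = Varp E p f"
  have "l > 0" unfolding l_def by (rule assms(5))
  define g where "g = (\<lambda>x. if x \<in> V then (f x - m) / l else 0)"
  have g_affine: "\<forall>x\<in>V. g x = (1 / l) * f x + (- m / l)"
    unfolding g_def by (simp add: diff_divide_distrib)
  have g_nonneg: "\<forall>x\<in>V. 0 \<le> g x"
    unfolding g_def using m_le \<open>l > 0\<close> by simp
  have "Varp E p g = \<bar>1 / l\<bar> * Varp E p f"
    by (rule Varp_affine[OF adj_rel_subset[OF assms(1)] g_affine assms(3)])
  then have Varp_g: "Varp E p g = 1"
    using \<open>l > 0\<close> unfolding l_def by simp
  have "\<forall>u\<in>V. maxfun V E g u = (1 / l) * maxfun V E f u + (- m / l)"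
    using maxfun_affine[OF fin _ _ assms(4) g_nonneg g_affine] \<open>l > 0\<close> by simp
  then have "Varp E p (maxfun V E g) = \<bar>1 / l\<bar> * Varp E p (maxfun V E f)"
    by (rule Varp_affine[OF adj_rel_subset[OF assms(1)] _ assms(3)])
  then have ratio: "maxfun_ratio V E p g = maxfun_ratio V E p f"
    using \<open>l > 0\<close> unfolding Varp_g l_def by simp
  have "0 \<le> g x \<and> g x \<le> real (graph_diam V E)" if "x \<in> V" for x
  proof -
    have "g w = 0"
      unfolding g_def using w by simp
    then have "g x = \<bar>g x - g w\<bar>"
      using g_nonneg that by simp
    also have "\<dots> \<le> real (gdist E w x)"
      using abs_diff_le_gdist_Varp[OF assms(1-3) that w(1), of g] unfolding Varp_g by simp
    also have "\<dots> \<le> real (graph_diam V E)"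
      using gdist_le_graph_diam[OF fin w(1) that] by simp
    finally show ?thesis
      using g_nonneg that by simp
  qed
  then have "g \<in> normalized_fns V E p"
    unfolding normalized_fns_def using Varp_g by (auto simp: g_def)
  then show ?thesis
    using ratio by (rule that)
qed

lemma normalized_fns_nonempty:
  assumes "simple_graph V E" "connected_graph V E" "p > 0" "(a, b) \<in> adj_rel E"
  shows "normalized_fns V E p \<noteq> {}"
proof -
  let ?\<chi> = "\<lambda>x. if x = a then 1 else 0 :: real"
  have "1 \<le> Varp E p ?\<chi>"
    using edge_diff_le_Varp[OF assms(1,4,3), of ?\<chi>] adj_rel_irrefl[OF assms(1,4)] by simp
  then have "Varp E p ?\<chi> > 0" by linarith
  moreover have "\<forall>x\<in>V. 0 \<le> ?\<chi> x" by simp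
  ultimately obtain g where "g \<in> normalized_fns V E p"
    using normalize_nonneg_fn[OF assms(1-3)] by metis
  then show ?thesis by blast
qed

lemma maxfun_ratio_le_normalized:
  assumes "simple_graph V E" "connected_graph V E" "p > 0" "Varp E p f > 0"
  obtains g where "g \<in> normalized_fns V E p" "maxfun_ratio V E p f \<le> maxfun_ratio V E p g"
proof (cases "Varp E p (\<lambda>x. \<bar>f x\<bar>) > 0")
  case True
  have "\<forall>x\<in>V. 0 \<le> \<bar>f x\<bar>" by simp
  then obtain g where g: "g \<in> normalized_fns V E p"
      "maxfun_ratio V E p g = maxfun_ratio V E p (\<lambda>x. \<bar>f x\<bar>)"
    by (rule normalize_nonneg_fn[OF assms(1-3) _ True])
  have "maxfun_ratio V E p f \<le> maxfun_ratio V E p (\<lambda>x. \<bar>f x\<bar>)"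
    unfolding maxfun_abs using True assms(4) Varp_abs_le[OF assms(3), of E f]
    by (intro divide_left_mono Varp_nonneg mult_pos_pos) auto
  then show ?thesis
    using g by (intro that[of g]) auto
next
  case False
  then have "Varp E p (\<lambda>x. \<bar>f x\<bar>) = 0"
    using Varp_nonneg[of E p "\<lambda>x. \<bar>f x\<bar>"] by linarith
  then have abs_const: "\<forall>u\<in>V. \<forall>v\<in>V. \<bar>f u\<bar> = \<bar>f v\<bar>"
    using Varp_eq_0_iff[OF assms(1-3), of "\<lambda>x. \<bar>f x\<bar>"] by blast
  obtain a b where ab: "(a, b) \<in> adj_rel E"
    using Varp_pos_imp_adj_rel_nonempty[OF assms(4)] by auto
  then have "a \<in> V"
    using adj_rel_subset[OF assms(1)] by blast
  have "finite V"
    using simple_graph_finite[OF assms(1)] .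
  have "maxfun V E f u = \<bar>f a\<bar>" if "u \<in> V" for u
    using maxfun_const_on[OF \<open>finite V\<close> that] abs_const \<open>a \<in> V\<close> by blast
  then have "Varp E p (maxfun V E f) = 0"
    using Varp_eq_0_iff[OF assms(1-3), of "maxfun V E f"] by simp
  moreover obtain g where "g \<in> normalized_fns V E p"
    using normalized_fns_nonempty[OF assms(1-3) ab] by blast
  moreover have "0 \<le> maxfun_ratio V E p g"
    by (simp add: Varp_nonneg divide_nonneg_nonneg)
  ultimately show ?thesis
    using that[of g] by simp
qed

theorem proposition4p1:
  fixes V :: "'a set" and E :: "'a set set" and p :: real
  assumes "simple_graph V E"
    and "connected_graph V E"
    and "card V \<ge> 2"
    and "p > 0"
  shows "\<exists>f :: 'a \<Rightarrow> real. (\<forall>v\<in>V. f v \<ge> 0) \<and> Varp E p f > 0 \<and>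
           ereal (Varp E p (maxfun V E f) / Varp E p f) = Cconst V E p"
proof -
  let ?K = "normalized_fns V E p"
  have "finite V"
    using simple_graph_finite[OF assms(1)] .
  obtain a b where "(a, b) \<in> adj_rel E"
    using connected_graph_obtain_edge[OF assms(1-3)] .
  then have "?K \<noteq> {}"
    using normalized_fns_nonempty[OF assms(1,2,4)] by blast
  moreover have "continuous_on ?K (\<lambda>f. Varp E p (maxfun V E f))"
    using continuous_on_Varp[OF assms(4) continuous_on_maxfun[OF \<open>finite V\<close>]] .
  ultimately obtain f\<^sub>0 where f\<^sub>0: "f\<^sub>0 \<in> ?K"
    and max: "\<forall>g\<in>?K. Varp E p (maxfun V E g) \<le> Varp E p (maxfun V E f\<^sub>0)"
    using continuous_attains_sup[OF compact_normalized_fns[OF assms(4)]] by blast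
  have "maxfun_ratio V E p f \<le> maxfun_ratio V E p f\<^sub>0" if pos: "Varp E p f > 0" for f
  proof -
    obtain g where g: "g \<in> ?K" "maxfun_ratio V E p f \<le> maxfun_ratio V E p g"
      using maxfun_ratio_le_normalized[OF assms(1,2,4) pos] .
    then have "maxfun_ratio V E p f \<le> Varp E p (maxfun V E g)"
      using Varp_normalized_fn[OF g(1)] by simp
    also have "\<dots> \<le> Varp E p (maxfun V E f\<^sub>0)"
      using max g(1) by blast
    also have "\<dots> = maxfun_ratio V E p f\<^sub>0"
      using Varp_normalized_fn[OF f\<^sub>0] by simp
    finally show ?thesis .
  qed
  moreover have "Varp E p f\<^sub>0 > 0"
    using Varp_normalized_fn[OF f\<^sub>0] by simp
  ultimately have "Cconst V E p = ereal (maxfun_ratio V E p f\<^sub>0)"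
    by (rule Cconst_eq_maxfun_ratio[rotated])
  then show ?thesis
    using normalized_fns_nonneg[OF f\<^sub>0] \<open>Varp E p f\<^sub>0 > 0\<close> by (intro exI[of _ f\<^sub>0]) auto
qed

end
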